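(* Let $\rho\in\mathcal S_=(\hat CQQ')$ be classical on $\hat C$ and let $f,g$ be real functions on the alphabet of $\hat C$ with $f(\hat c)\le g(\hat c)$ for all $\hat c$. Then for any $\alpha\in[\frac12,1)\cup(1,\infty]$, $$\widetilde H^{\uparrow,g}_\alpha(Q|\hat CQ')_\rho\le\widetilde H^{\uparrow,f}_\alpha(Q|\hat CQ')_\rho.$$
   Context: $\widetilde H^\uparrow_\alpha(A|B)_\rho=\sup_{\sigma_B}-\widetilde D_\alpha(\rho_{AB}\|\mathbb 1_A\otimes\sigma_B)$ with sandwiched Rényi divergence $\widetilde D_\alpha(\rho\|\sigma)=\frac1{\alpha-1}\log\mathrm{Tr}[(\sigma^{\frac{1-\alpha}{2\alpha}}\rho\sigma^{\frac{1-\alpha}{2\alpha}})^\alpha]$. For $\rho=\sum_{\hat c}\rho(\hat c)|\hat c\rangle\langle\hat c|\otimes\rho_{|\hat c}$, $\widetilde H^{\uparrow,f}_\alpha(Q|\hat CQ')_\rho=\frac{\alpha}{1-\alpha}\log\sum_{\hat c}\rho(\hat c)2^{\frac{1-\alpha}{\alpha}(\widetilde H^\uparrow_\alpha(Q|Q')_{\rho_{|\hat c}}-f(\hat c))}$. *)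

theory Defs
  imports Complex_Main "Jordan_Normal_Form.Matrix" "HOL-Library.Extended_Real"
begin

definition cadj :: "complex mat \<Rightarrow> complex mat" where
  "cadj A = mat (dim_col A) (dim_row A) (\<lambda>(i,j). cnj (A $$ (j,i)))"

definition mtrace :: "complex mat \<Rightarrow> complex" where
  "mtrace A = (\<Sum>i<dim_row A. A $$ (i,i))"

definition qform :: "complex mat \<Rightarrow> complex vec \<Rightarrow> complex" where
  "qform A v = (\<Sum>i<dim_vec v. cnj (v $ i) * (A *\<^sub>v v) $ i)"

definition hermitian :: "nat \<Rightarrow> complex mat \<Rightarrow> bool" where
  "hermitian n A \<longleftrightarrow> A \<in> carrier_mat n n \<and> cadj A = A"

definition psd :: "nat \<Rightarrow> complex mat \<Rightarrow> bool" where
  "psd n A \<longleftrightarrow> hermitian n A \<and> (\<forall>v\<in>carrier_vec n. 0 \<le> Re (qform A v))"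

definition posdef :: "nat \<Rightarrow> complex mat \<Rightarrow> bool" where
  "posdef n A \<longleftrightarrow> hermitian n A \<and> (\<forall>v\<in>carrier_vec n. v \<noteq> 0\<^sub>v n \<longrightarrow> 0 < Re (qform A v))"

definition density :: "nat \<Rightarrow> complex mat \<Rightarrow> bool" where
  "density n A \<longleftrightarrow> psd n A \<and> mtrace A = 1"

definition unitary :: "nat \<Rightarrow> complex mat \<Rightarrow> bool" where
  "unitary n U \<longleftrightarrow> U \<in> carrier_mat n n \<and> cadj U * U = 1\<^sub>m n \<and> U * cadj U = 1\<^sub>m n"

definition rdiag :: "nat \<Rightarrow> (nat \<Rightarrow> real) \<Rightarrow> complex mat" where
  "rdiag n d = mat n n (\<lambda>(i,j). if i = j then complex_of_real (d i) else 0)"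

text \<open>Zero eigenvalues are mapped to 0 (since 0 powr t = 0),
  i.e. negative powers are taken on the support (generalized inverse convention).\<close>
definition psd_pow :: "nat \<Rightarrow> complex mat \<Rightarrow> real \<Rightarrow> complex mat" where
  "psd_pow n A t = (SOME B. \<exists>U d. unitary n U \<and> (\<forall>i<n. 0 \<le> d i) \<and>
      A = U * rdiag n d * cadj U \<and> B = U * rdiag n (\<lambda>i. d i powr t) * cadj U)"

definition kron :: "complex mat \<Rightarrow> complex mat \<Rightarrow> complex mat" where
  "kron A B = mat (dim_row A * dim_row B) (dim_col A * dim_col B)
     (\<lambda>(i,j). A $$ (i div dim_row B, j div dim_col B) * B $$ (i mod dim_row B, j mod dim_col B))"

definition sandwiched_D :: "nat \<Rightarrow> real \<Rightarrow> complex mat \<Rightarrow> complex mat \<Rightarrow> real" where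
  "sandwiched_D n \<alpha> \<rho> \<sigma> =
     (let S = psd_pow n \<sigma> ((1 - \<alpha>) / (2 * \<alpha>))
      in 1 / (\<alpha> - 1) * log 2 (Re (mtrace (psd_pow n (S * \<rho> * S) \<alpha>))))"

definition max_D :: "nat \<Rightarrow> complex mat \<Rightarrow> complex mat \<Rightarrow> real" where
  "max_D n \<rho> \<sigma> = log 2 (Inf {l::real. 0 < l \<and> psd n (l \<cdot>\<^sub>m \<sigma> - \<rho>)})"

definition sandwiched_D_ext :: "nat \<Rightarrow> ereal \<Rightarrow> complex mat \<Rightarrow> complex mat \<Rightarrow> real" where
  "sandwiched_D_ext n \<alpha> \<rho> \<sigma> =
     (if \<alpha> = \<infinity> then max_D n \<rho> \<sigma> else sandwiched_D n (real_of_ereal \<alpha>) \<rho> \<sigma>)"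

text \<open>The supremum runs over full-rank states \<sigma> on Q' (this gives the same value as the supremum
  over all states).\<close>
definition H_up :: "ereal \<Rightarrow> nat \<Rightarrow> nat \<Rightarrow> complex mat \<Rightarrow> real" where
  "H_up \<alpha> dQ dQ' \<rho> = Sup {- sandwiched_D_ext (dQ * dQ') \<alpha> \<rho> (kron (1\<^sub>m dQ) \<sigma>) | \<sigma>.
       density dQ' \<sigma> \<and> posdef dQ' \<sigma>}"

text \<open>The f-weighted conditional entropy H^{\<up>,f}_\<alpha>(Q|\<hat>C Q')_\<rho> of the cq-state
  \<rho> = \<Sum>_c p(c) |c><c| \<otimes> \<rho>_c, where c ranges over the finite alphabet C.
  For \<alpha> = \<infinity> the prefactors \<alpha>/(1-\<alpha>) and (1-\<alpha>)/\<alpha> take their limiting value -1.\<close>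
definition H_up_f :: "ereal \<Rightarrow> nat \<Rightarrow> nat \<Rightarrow> 'c set \<Rightarrow> ('c \<Rightarrow> real) \<Rightarrow> ('c \<Rightarrow> complex mat)
                      \<Rightarrow> ('c \<Rightarrow> real) \<Rightarrow> real" where
  "H_up_f \<alpha> dQ dQ' C p \<rho>c f =
    (if \<alpha> = \<infinity> then
       - log 2 (\<Sum>c\<in>C. p c * 2 powr (- (H_up \<alpha> dQ dQ' (\<rho>c c) - f c)))
     else (let a = real_of_ereal \<alpha> in
       a / (1 - a) * log 2 (\<Sum>c\<in>C. p c * 2 powr ((1 - a) / a * (H_up \<alpha> dQ dQ' (\<rho>c c) - f c)))))"

end

theory Submission
  imports Defs
begin

text \<open>Writing \<open>s = (1 - \<alpha>)/\<alpha>\<close> (with \<open>s = -1\<close> for \<open>\<alpha> = \<infinity>\<close>), the weighted entropy is the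
  exponential mean \<open>s\<^sup>-\<^sup>1 log\<^sub>2 \<Sum>\<^sub>c p(c) 2\<^bsup>s x(c)\<^esup>\<close> of \<open>x(c) = H(c) - f(c)\<close>. Every such mean
  with \<open>s \<noteq> 0\<close> is monotone in \<open>x\<close>: for \<open>s < 0\<close> both the exponential and the prefactor reverse
  the order. Hence increasing \<open>f\<close> to \<open>g\<close> can only decrease it.\<close>

definition exp_mean :: "real \<Rightarrow> 'c set \<Rightarrow> ('c \<Rightarrow> real) \<Rightarrow> ('c \<Rightarrow> real) \<Rightarrow> real" where
  "exp_mean s C p x = log 2 (\<Sum>c\<in>C. p c * 2 powr (s * x c)) / s"

definition renyi_ratio :: "ereal \<Rightarrow> real" where
  "renyi_ratio \<alpha> = (if \<alpha> = \<infinity> then -1 else (1 - real_of_ereal \<alpha>) / real_of_ereal \<alpha>)"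

lemma sum_weighted_powr_pos:
  fixes p e :: "'c \<Rightarrow> real"
  assumes "\<forall>c\<in>C. 0 \<le> p c" and "0 < (\<Sum>c\<in>C. p c)"
  shows "0 < (\<Sum>c\<in>C. p c * 2 powr e c)"
proof -
  have "finite C"
    using assms(2) sum.infinite by (metis less_irrefl)
  obtain c0 where c0: "c0 \<in> C" "p c0 \<noteq> 0"
    using assms(2) sum.neutral by (metis less_irrefl)
  show ?thesis
  proof (rule sum_pos2[OF \<open>finite C\<close> \<open>c0 \<in> C\<close>])
    show "0 < p c0 * 2 powr e c0"
      using assms(1) c0 by (simp add: order_le_neq_trans)
  qed (use assms(1) in simp)
qed

lemma exp_mean_mono:
  fixes p x y :: "'c \<Rightarrow> real"
  assumes "s \<noteq> 0" and "\<forall>c\<in>C. 0 \<le> p c" and "0 < (\<Sum>c\<in>C. p c)"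
    and "\<forall>c\<in>C. x c \<le> y c"
  shows "exp_mean s C p x \<le> exp_mean s C p y"
proof -
  let ?S = "\<lambda>z. \<Sum>c\<in>C. p c * 2 powr (s * z c)"
  have S_pos: "0 < ?S z" for z
    using sum_weighted_powr_pos[OF assms(2,3)] .
  consider "0 < s" | "s < 0"
    using assms(1) by linarith
  then show ?thesis
  proof cases
    case 1
    then have "?S x \<le> ?S y"
      using assms(2,4) by (intro sum_mono mult_left_mono) auto
    then have "log 2 (?S x) \<le> log 2 (?S y)"
      using S_pos by simp
    then show ?thesis
      unfolding exp_mean_def by (rule divide_right_mono) (use \<open>0 < s\<close> in simp)
  next
    case 2
    have "s * y c \<le> s * x c" if "c \<in> C" for c
      using assms(4) that \<open>s < 0\<close> by (simp add: mult_left_mono_neg)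
    then have "?S y \<le> ?S x"
      using assms(2) by (intro sum_mono mult_left_mono) auto
    then have "log 2 (?S y) \<le> log 2 (?S x)"
      using S_pos by simp
    then show ?thesis
      unfolding exp_mean_def by (rule divide_right_mono_neg) (use \<open>s < 0\<close> in simp)
  qed
qed

lemma H_up_f_eq_exp_mean:
  "H_up_f \<alpha> dQ dQ' C p \<rho>c f
     = exp_mean (renyi_ratio \<alpha>) C p (\<lambda>c. H_up \<alpha> dQ dQ' (\<rho>c c) - f c)"
  by (simp add: H_up_f_def exp_mean_def renyi_ratio_def Let_def)

lemma renyi_ratio_nonzero:
  assumes "\<alpha> \<in> {ereal (1/2)..<1} \<union> {1<..\<infinity>}"
  shows "renyi_ratio \<alpha> \<noteq> 0"
  using assms by (cases \<alpha>) (auto simp: renyi_ratio_def)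

theorem mainTheorem4:
  fixes C :: "'c set" and p :: "'c \<Rightarrow> real" and \<rho>c :: "'c \<Rightarrow> complex mat"
    and f g :: "'c \<Rightarrow> real" and dQ dQ' :: nat and \<alpha> :: ereal
  assumes "finite C" and "C \<noteq> {}"
    and "0 < dQ" and "0 < dQ'"
    and "\<forall>c\<in>C. 0 \<le> p c" and "(\<Sum>c\<in>C. p c) = 1"
    and "\<forall>c\<in>C. 0 < p c \<longrightarrow> density (dQ * dQ') (\<rho>c c)"
    and "\<forall>c\<in>C. f c \<le> g c"
    and "\<alpha> \<in> {ereal (1/2)..<1} \<union> {1<..\<infinity>}"
  shows "H_up_f \<alpha> dQ dQ' C p \<rho>c g \<le> H_up_f \<alpha> dQ dQ' C p \<rho>c f"
  unfolding H_up_f_eq_exp_mean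
  using renyi_ratio_nonzero[OF assms(9)] assms(5,6,8)
  by (intro exp_mean_mono) auto

end
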